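(* Let $F$ be a finite field, let $f,g,q\in F[\lambda]$ with $f,g$ relatively prime and $q=\sum_{i=0}^m q_i\lambda^i$ monic and irreducible of degree $m$, and let $Q(\lambda)=\mathfrak p_q(g,f):=\sum_{i=0}^m q_i\,f(\lambda)^i g(\lambda)^{m-i}$. Assume $Q\neq 0$. Let $L$ be the splitting field of $q$ over $F$ and $\alpha\in L$ a root of $q$. Then the number of distinct monic irreducible factors of $Q$ in $F[\lambda]$ equals the number of distinct monic irreducible factors of $f(\lambda)-\alpha g(\lambda)$ in $L[\lambda]$.
   Context: $\mathfrak p_q(g,f)=g^{\deg q}\,q(f/g)$ is the homogenization of $q$ evaluated at $(g,f)$. A polynomial $\mathfrak p_q(g,f)$ with $f,g$ coprime and $q$ monic irreducible is called a candidate. *)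

theory Defs
  imports "HOL-Computational_Algebra.Computational_Algebra"
begin

definition homog_eval :: "'a::comm_ring_1 poly \<Rightarrow> 'a poly \<Rightarrow> 'a poly \<Rightarrow> 'a poly" where
  "homog_eval q g f = (\<Sum>i\<le>degree q. smult (coeff q i) (f ^ i * g ^ (degree q - i)))"

definition is_field_hom :: "('a::field \<Rightarrow> 'b::field) \<Rightarrow> bool" where
  "is_field_hom h \<longleftrightarrow> h 0 = 0 \<and> h 1 = 1 \<and>
     (\<forall>x y. h (x + y) = h x + h y) \<and> (\<forall>x y. h (x * y) = h x * h y)"

definition is_subfield :: "'b::field set \<Rightarrow> bool" where
  "is_subfield K \<longleftrightarrow> 0 \<in> K \<and> 1 \<in> K \<and>
     (\<forall>x\<in>K. \<forall>y\<in>K. x + y \<in> K \<and> x * y \<in> K) \<and>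
     (\<forall>x\<in>K. - x \<in> K \<and> inverse x \<in> K)"

definition is_splitting_field :: "('a::field \<Rightarrow> 'b::field) \<Rightarrow> 'a poly \<Rightarrow> bool" where
  "is_splitting_field h q \<longleftrightarrow> is_field_hom h \<and>
     (\<exists>c rs. map_poly h q = smult c (\<Prod>r\<leftarrow>rs. [:- r, 1:])) \<and>
     (\<forall>K. is_subfield K \<and> range h \<subseteq> K \<and> {x. poly (map_poly h q) x = 0} \<subseteq> K \<longrightarrow> K = UNIV)"

definition num_monic_irred_factors :: "'a::field poly \<Rightarrow> nat" where
  "num_monic_irred_factors p = card {d. lead_coeff d = 1 \<and> irreducible d \<and> d dvd p}"

end

(*
  Let N = |F| and let phi(x) = x^N be the Frobenius of L over F.  It is additive because
  (X + 1)^N = X^N + 1 already holds in F[X] (both sides agree on all N points of F), its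
  fixed field is h(F), and a phi-invariant polynomial over L therefore comes from F[X].
  With m = deg q, the roots of h(q) are the distinct conjugates phi^j(alpha), j < m; the
  fixed field of phi^m contains h(F) and these roots, so phi^m = id on the splitting field L.

  Hence h(Q) = prod_{j<m} u_j with u_j = h(f) - phi^j(alpha) h(g) = phi^j(u_0), and the u_j
  are pairwise coprime because f and g are.  Relate a monic irreducible factor d of u_0 with
  a monic irreducible factor D of Q when d divides h(D).  Each d has exactly one such D:
  d divides h(Q), and distinct D stay coprime in L[X].  Each D has at least one such d: an
  irreducible factor of h(D) divides some u_j, and phi^(m-j) moves it into u_m = u_0.  And it
  has at most one: if d1 and d2 divide h(D), the norm prod_{j<m} phi^j(d1) is phi-invariant,
  so it comes from F[X] and is divisible by D; thus d2 divides some phi^j(d1), which divides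
  u_j, forcing j = 0.
*)
theory Submission
  imports Defs "Berlekamp_Zassenhaus.Finite_Field" "HOL-Combinatorics.Cycles"
begin

hide_const (open) UnivPoly.coeff UnivPoly.monom module.smult

lemma card_eq_if_bijective_relation:
  assumes "\<And>s. s \<in> S \<Longrightarrow> \<exists>!t. t \<in> T \<and> R s t"
    and "\<And>t. t \<in> T \<Longrightarrow> \<exists>!s. s \<in> S \<and> R s t"
  shows "card S = card T"
proof (rule bij_betw_same_card)
  let ?f = "\<lambda>s. THE t. t \<in> T \<and> R s t" and ?g = "\<lambda>t. THE s. s \<in> S \<and> R s t"
  have f: "?f s \<in> T \<and> R s (?f s)" if "s \<in> S" for s
    using theI'[OF assms(1)[OF that]] .
  have g: "?g t \<in> S \<and> R (?g t) t" if "t \<in> T" for t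
    using theI'[OF assms(2)[OF that]] .
  show "bij_betw ?f S T"
  proof (rule bij_betw_byWitness[where f' = ?g])
    show "\<forall>s\<in>S. ?g (?f s) = s"
      using f by (auto intro: the1_equality[OF assms(2)])
    show "\<forall>t\<in>T. ?f (?g t) = t"
      using g by (auto intro: the1_equality[OF assms(1)])
  qed (use f g in auto)
qed

lemma prime_elem_dvd_prod:
  assumes "prime_elem p" "finite A" "p dvd prod f A"
  shows "\<exists>a\<in>A. p dvd f a"
  using assms(2,3)
proof (induction A rule: finite_induct)
  case empty
  then show ?case using assms(1) prime_elem_not_unit by auto
next
  case (insert a A)
  then show ?case using prime_elem_dvd_mult_iff[OF assms(1)] by auto
qed

lemma funpow_period_exists:
  assumes "inj f" and "finite (range (\<lambda>j. (f ^^ j) x))"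
  shows "\<exists>n>0. (f ^^ n) x = x"
proof -
  have "\<not> inj (\<lambda>j. (f ^^ j) x)"
    using assms(2) finite_imageD infinite_UNIV_nat by blast
  then obtain i j where ij: "i \<noteq> j" "(f ^^ i) x = (f ^^ j) x"
    by (auto simp: inj_def)
  show ?thesis
  proof (cases "i < j")
    case True
    then show ?thesis
      using funpow_diff[OF assms(1) less_imp_le ij(2)] by (intro exI[of _ "j - i"]) auto
  next
    case False
    then have "j < i"
      using ij(1) by simp
    then show ?thesis
      using funpow_diff[OF assms(1) less_imp_le ij(2)[symmetric]] by (intro exI[of _ "i - j"]) auto
  qed
qed

lemma inj_on_funpow_least_power:
  assumes "inj f"
  shows "inj_on (\<lambda>i. (f ^^ i) x) {..<least_power f x}"
proof -
  have eq: "i = j" if "i \<le> j" "j < least_power f x" "(f ^^ i) x = (f ^^ j) x" for i j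
  proof -
    have "least_power f x dvd j - i"
      by (rule least_power_minimal[OF funpow_diff[OF assms that(1,3)]])
    moreover have "j - i < least_power f x"
      using that by linarith
    ultimately have "j - i = 0"
      using nat_dvd_not_less by blast
    then show ?thesis
      using that(1) by simp
  qed
  show ?thesis
  proof (rule inj_onI)
    fix i j assume "i \<in> {..<least_power f x}" "j \<in> {..<least_power f x}" "(f ^^ i) x = (f ^^ j) x"
    then show "i = j"
      using eq[of i j] eq[of j i] by (cases "i \<le> j") auto
  qed
qed

lemma prod_lessThan_cyclic_shift:
  fixes F :: "nat \<Rightarrow> 'a::comm_monoid_mult"
  assumes "F n = F 0"
  shows "(\<Prod>j<n. F (Suc j)) = (\<Prod>j<n. F j)"
proof (cases n)
  case (Suc k)
  have "(\<Prod>j<Suc k. F (Suc j)) = (\<Prod>j<k. F (Suc j)) * F (Suc k)"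
    by simp
  also have "\<dots> = F 0 * (\<Prod>j<k. F (Suc j))"
    using assms Suc by (simp add: mult.commute)
  also have "\<dots> = (\<Prod>j<Suc k. F j)"
    by (rule prod.lessThan_Suc_shift[symmetric])
  finally show ?thesis using Suc by simp
qed simp

lemma coprime_if_irreducible_not_dvd:
  assumes "irreducible p" "\<not> p dvd a"
  shows "coprime p a"
proof (rule coprimeI)
  fix c assume c: "c dvd p" "c dvd a"
  have "p dvd c \<or> is_unit c"
    by (rule irreducibleD'[OF assms(1) c(1)])
  then show "is_unit c"
    using assms(2) c(2) dvd_trans by blast
qed

lemma degree_pos_if_irreducible:
  fixes p :: "'a::field poly"
  assumes "irreducible p"
  shows "degree p > 0"
  using irreducible\<^sub>dD(1)[of p] assms by simp

lemma coprime_distinct_monic_irreducible: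
  fixes p q :: "'a::field poly"
  assumes "monic p" "irreducible p" "monic q" "irreducible q" "p \<noteq> q"
  shows "coprime p q"
  using assms irreducible\<^sub>d_dvd_eq[of p q] by (auto intro: coprime_if_irreducible_not_dvd)

lemma monic_dvd_eq_of_degree_le:
  fixes p q :: "'a::idom poly"
  assumes "monic p" "monic q" "p dvd q" "degree q \<le> degree p"
  shows "p = q"
proof -
  obtain k where q: "q = p * k"
    using assms(3) by (elim dvdE)
  have "p \<noteq> 0" "k \<noteq> 0"
    using assms(1,2) q by auto
  then have "degree k = 0"
    using q assms(4) by (simp add: degree_mult_eq)
  then obtain c where "k = [:c:]"
    by (elim degree_eq_zeroE)
  moreover have "lead_coeff k = 1"
    using q assms(1,2) by (simp add: lead_coeff_mult)
  ultimately show ?thesis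
    using q by simp
qed

(* Decoupling the degree from p makes the homogenisation linear in p. *)
definition homog_eval_deg ::
    "nat \<Rightarrow> 'a::comm_ring_1 poly \<Rightarrow> 'a poly \<Rightarrow> 'a poly \<Rightarrow> 'a poly" where
  "homog_eval_deg n p g f = (\<Sum>i\<le>n. smult (coeff p i) (f ^ i * g ^ (n - i)))"

lemma homog_eval_deg_diff:
  "homog_eval_deg n (p - q) g f = homog_eval_deg n p g f - homog_eval_deg n q g f"
  by (simp add: homog_eval_deg_def smult_diff_left sum_subtractf)

lemma homog_eval_deg_smult: "homog_eval_deg n (smult c p) g f = smult c (homog_eval_deg n p g f)"
  by (simp add: homog_eval_deg_def smult_sum2)

lemma homog_eval_deg_pCons_0:
  "homog_eval_deg (Suc n) (pCons 0 p) g f = f * homog_eval_deg n p g f"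
  unfolding homog_eval_deg_def sum.atMost_Suc_shift
  by (simp add: sum_distrib_left mult_smult_right mult.assoc)

lemma homog_eval_deg_Suc:
  assumes "degree p \<le> n"
  shows "homog_eval_deg (Suc n) p g f = g * homog_eval_deg n p g f"
proof -
  have "coeff p (Suc n) = 0"
    using assms by (simp add: coeff_eq_0)
  moreover have "f ^ i * g ^ (Suc n - i) = g * (f ^ i * g ^ (n - i))" if "i \<le> n" for i
    using that by (simp add: Suc_diff_le algebra_simps)
  ultimately show ?thesis
    by (simp add: homog_eval_deg_def sum_distrib_left mult_smult_right)
qed

lemma homog_eval_linear_mult:
  fixes p :: "'a::idom poly"
  assumes "p \<noteq> 0"
  shows "homog_eval ([:- b, 1:] * p) g f = (f - smult b g) * homog_eval p g f"
proof -
  have deg: "degree ([:- b, 1:] * p) = Suc (degree p)"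
    using assms by (subst degree_mult_eq) auto
  have "homog_eval ([:- b, 1:] * p) g f = homog_eval_deg (Suc (degree p)) ([:- b, 1:] * p) g f"
    by (simp only: homog_eval_def homog_eval_deg_def deg)
  also have "[:- b, 1:] * p = pCons 0 p - smult b p"
    by simp
  also have "homog_eval_deg (Suc (degree p)) (pCons 0 p - smult b p) g f
      = (f - smult b g) * homog_eval_deg (degree p) p g f"
    by (simp add: homog_eval_deg_diff homog_eval_deg_smult homog_eval_deg_pCons_0
        homog_eval_deg_Suc algebra_simps)
  finally show ?thesis
    by (simp add: homog_eval_def homog_eval_deg_def)
qed

lemma homog_eval_prod_linear:
  fixes b :: "nat \<Rightarrow> 'a::idom"
  shows "homog_eval (\<Prod>j<n. [:- b j, 1:]) g f = (\<Prod>j<n. f - smult (b j) g)"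
proof (induction n)
  case 0
  then show ?case by (simp add: homog_eval_def)
next
  case (Suc n)
  have nonzero: "(\<Prod>j<n. [:- b j, 1:]) \<noteq> 0"
    by (simp add: prod_zero_iff)
  have "homog_eval ([:- b n, 1:] * (\<Prod>j<n. [:- b j, 1:])) g f
      = (f - smult (b n) g) * (\<Prod>j<n. f - smult (b j) g)"
    by (simp only: homog_eval_linear_mult[OF nonzero] Suc.IH)
  then show ?case
    by (simp only: prod.lessThan_Suc mult.commute)
qed

lemma power_card_eq_self:
  fixes x :: "'a::{field,finite}"
  shows "x ^ CARD('a) = x"
proof (cases "x = 0")
  case False
  let ?U = "UNIV - {0::'a}"
  have "(\<Prod>y\<in>?U. x * y) = (\<Prod>y\<in>?U. y)"
    by (rule prod.reindex_bij_witness[of _ "\<lambda>y. y / x" "\<lambda>y. x * y"]) (use False in auto)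
  then have "x ^ card ?U * \<Prod>?U = 1 * \<Prod>?U"
    by (simp add: prod.distrib)
  then have "x ^ (CARD('a) - 1) = 1"
    by (simp add: card_Diff_subset)
  moreover have "CARD('a) = Suc (CARD('a) - 1)"
    using finite_UNIV_card_ge_0[where 'a='a] by simp
  ultimately show ?thesis
    by (metis power_Suc2 mult_1_left)
qed (simp add: finite_UNIV_card_ge_0)

lemma linear_power_card:
  "[:1, 1:] ^ CARD('a) = monom 1 CARD('a) + (1 :: 'a::{field,finite} poly)"
proof -
  let ?N = "CARD('a)"
  define D :: "'a poly" where "D = [:1, 1:] ^ ?N - monom 1 ?N - 1"
  have N: "?N > 0" by simp
  have roots: "{x. poly D x = 0} = UNIV"
    by (auto simp: D_def poly_monom power_card_eq_self)
  have "degree D \<le> ?N"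
    unfolding D_def by (intro degree_diff_le) (auto simp: degree_linear_power degree_monom_le)
  moreover have "coeff D ?N = 0"
    using N by (simp add: D_def coeff_linear_power)
  ultimately have "degree D < ?N \<or> D = 0"
    by (metis le_neq_implies_less leading_coeff_0_iff)
  moreover have "D \<noteq> 0 \<Longrightarrow> ?N \<le> degree D"
    using card_poly_roots_bound[of D] roots by simp
  ultimately have "D = 0" by linarith
  then show ?thesis by (simp add: D_def algebra_simps)
qed

context field_hom
begin

sublocale poly_hom: map_poly_inj_idom_divide_hom hom ..

lemma coprime_map_poly:
  assumes "coprime p q"
  shows "coprime (map_poly hom p) (map_poly hom q)"
  using assms
proof (induction "degree q" arbitrary: p q rule: less_induct)
  case less
  consider "q = 0" | "q dvd p" | "q \<noteq> 0" "p mod q \<noteq> 0"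
    using mod_0_imp_dvd by blast
  then show ?case
  proof cases
    case 1
    then have "is_unit p"
      using less.prems by simp
    then have "is_unit (map_poly hom p)"
      by (rule poly_hom.hom_dvd_1)
    then show ?thesis
      by (rule is_unit_left_imp_coprime)
  next
    case 2
    then have "is_unit q"
      by (rule coprime_common_divisor[OF less.prems _ dvd_refl])
    then have "is_unit (map_poly hom q)"
      by (rule poly_hom.hom_dvd_1)
    then show ?thesis
      by (rule is_unit_right_imp_coprime)
  next
    case 3
    then have "degree (p mod q) < degree q"
      by (rule degree_mod_less')
    moreover have "coprime q (p mod q)"
      using 3 less.prems by (simp add: coprime_mod_right_iff coprime_commute)
    ultimately have "coprime (map_poly hom q) (map_poly hom (p mod q))"
      by (rule less.hyps)
    then show ?thesis
      using 3 by (simp add: map_poly_mod coprime_mod_right_iff coprime_commute)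
  qed
qed

lemma monic_irreducible_factor_lift:
  assumes "P \<noteq> 0" "prime_elem d" "d dvd map_poly hom P"
  shows "\<exists>D. monic D \<and> irreducible D \<and> D dvd P \<and> d dvd map_poly hom D"
  using assms(1,3)
proof (induction "degree P" arbitrary: P rule: less_induct)
  case less
  have "degree P > 0"
  proof (rule ccontr)
    assume "\<not> degree P > 0"
    then have "is_unit (map_poly hom P)"
      using less.prems(1) by (simp add: is_unit_iff_degree)
    then have "is_unit d"
      by (rule dvd_unit_imp_unit[OF less.prems(2)])
    then show False
      using prime_elem_not_unit[OF assms(2)] by contradiction
  qed
  then obtain D r where D: "irreducible D" "monic D" and P: "P = D * r"
    using irreducible_monic_factor by blast
  have "d dvd map_poly hom D \<or> d dvd map_poly hom r"
    using less.prems(2) P assms(2) by (simp add: poly_hom.hom_mult prime_elem_dvd_mult_iff)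
  then show ?case
  proof
    assume "d dvd map_poly hom r"
    moreover have "r \<noteq> 0" "degree r < degree P"
      using P less.prems(1) degree_pos_if_irreducible[OF D(1)] by (auto simp: degree_mult_eq)
    ultimately obtain D' where "monic D'" "irreducible D'" "D' dvd r" "d dvd map_poly hom D'"
      using less.hyps by blast
    moreover have "D' dvd P"
      using P \<open>D' dvd r\<close> by simp
    ultimately show ?case
      by blast
  qed (use D P in auto)
qed

lemma map_poly_homog_eval:
  "map_poly hom (homog_eval q g f) = homog_eval (map_poly hom q) (map_poly hom g) (map_poly hom f)"
  unfolding homog_eval_def poly_hom.hom_sum
  by (simp add: poly_hom.hom_mult poly_hom.hom_power map_poly_hom_smult)

lemma monic_irreducible_eq_of_common_factor:
  assumes "monic D1" "irreducible D1" "monic D2" "irreducible D2"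
    and "\<not> is_unit d" "d dvd map_poly hom D1" "d dvd map_poly hom D2"
  shows "D1 = D2"
proof (rule ccontr)
  assume "D1 \<noteq> D2"
  then have "coprime (map_poly hom D1) (map_poly hom D2)"
    using assms(1-4) by (intro coprime_map_poly coprime_distinct_monic_irreducible)
  then have "is_unit d"
    using assms(6,7) by (rule coprime_common_divisor)
  then show False
    using assms(5) by contradiction
qed

end

locale finite_field_embedding = field_hom hom for hom :: "'a::{field,finite} \<Rightarrow> 'b::field"
begin

definition frob :: "'b \<Rightarrow> 'b" where
  "frob x = x ^ CARD('a)"

lemma frob_add_one: "frob (x + 1) = frob x + 1"
proof -
  have "poly (map_poly hom ([:1, 1:] ^ CARD('a))) x = poly (map_poly hom (monom 1 CARD('a) + 1)) x"
    by (simp only: linear_power_card)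
  then show ?thesis
    by (simp add: frob_def poly_hom.hom_power poly_hom.hom_add map_poly_monom poly_monom add.commute)
qed

lemma frob_mult: "frob (x * y) = frob x * frob y"
  by (simp add: frob_def power_mult_distrib)

lemma frob_add: "frob (x + y) = frob x + frob y"
proof (cases "y = 0")
  case True
  then show ?thesis by (simp add: frob_def)
next
  case False
  have "x + y = y * (x / y + 1)"
    using False by (simp add: distrib_left)
  then have "frob (x + y) = frob (y * (x / y + 1))"
    by simp
  also have "\<dots> = frob y * (frob (x / y) + 1)"
    by (simp add: frob_mult frob_add_one)
  also have "\<dots> = frob x + frob y"
    using False by (simp add: frob_def power_divide field_simps)
  finally show ?thesis .
qed

sublocale frob: field_hom frob
proof unfold_locales
  show "frob 0 = 0" "frob 1 = 1"
    by (simp_all add: frob_def)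
qed (simp_all add: frob_add frob_mult)

lemma funpow_frob: "(frob ^^ j) x = x ^ CARD('a) ^ j"
  by (induction j) (simp_all add: frob_def mult.commute flip: power_mult)

sublocale frob_iter: field_hom "frob ^^ j"
proof unfold_locales
  show "(frob ^^ j) (x + y) = (frob ^^ j) x + (frob ^^ j) y" for x y
    by (induction j) (simp_all add: frob.hom_add)
qed (simp_all add: funpow_frob power_mult_distrib)

lemma funpow_frob_hom [simp]: "(frob ^^ j) (hom a) = hom a"
proof -
  have "frob (hom a) = hom a"
    by (simp add: frob_def flip: hom_power) (simp add: power_card_eq_self)
  then show ?thesis
    by (induction j) simp_all
qed

lemma map_poly_funpow_frob_hom [simp]: "map_poly (frob ^^ j) (map_poly hom P) = map_poly hom P"
  by (simp add: map_poly_map_poly o_def)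

lemma frob_fixed_points: "{x. frob x = x} = range hom"
proof -
  define X :: "'b poly" where "X = monom 1 CARD('a) - [:0, 1:]"
  have "card {0::'a, 1} \<le> CARD('a)"
    by (rule card_mono) simp_all
  then have card_gt_1: "CARD('a) > 1"
    by simp
  have "coeff X CARD('a) = 1"
    using card_gt_1 by (simp add: X_def coeff_pCons split: nat.split)
  then have "X \<noteq> 0" by auto
  have "degree X \<le> CARD('a)"
    unfolding X_def using card_gt_1 by (intro degree_diff_le) (auto simp: degree_monom_le)
  moreover have fixed_eq: "{x. frob x = x} = {x. poly X x = 0}"
    by (simp add: X_def frob_def poly_monom)
  ultimately have le: "card {x. frob x = x} \<le> card (range hom)"
    using card_poly_roots_bound[OF \<open>X \<noteq> 0\<close>] card_image[OF inj_f] by simp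
  have fin: "finite {x. frob x = x}"
    using poly_roots_finite[OF \<open>X \<noteq> 0\<close>] fixed_eq by simp
  have sub: "range hom \<subseteq> {x. frob x = x}"
    using funpow_frob_hom[of 1] by auto
  have "range hom = {x. frob x = x}"
    using card_subset_eq[OF fin sub] card_mono[OF fin sub] le by simp
  then show ?thesis
    by simp
qed

lemma frob_invariant_poly_descends:
  assumes "map_poly frob P = P"
  shows "\<exists>P0. P = map_poly hom P0"
proof -
  have "coeff P i \<in> range hom" for i
    using arg_cong[OF assms, of "\<lambda>p. coeff p i"] frob_fixed_points by auto
  then have "\<forall>c\<in>set (coeffs P). c \<in> range hom"
    by (auto simp: coeffs_def)
  then have "map_poly (hom \<circ> inv_into UNIV hom) P = P"
    by (intro map_poly_idI) (auto simp: f_inv_into_f)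
  then have "map_poly hom (map_poly (inv_into UNIV hom) P) = P"
    by (simp add: map_poly_map_poly)
  then show ?thesis by metis
qed

lemma poly_map_poly_funpow_frob_root:
  assumes "poly (map_poly hom P) x = 0"
  shows "poly (map_poly hom P) ((frob ^^ j) x) = 0"
  using frob_iter.poly_map_poly[of j "map_poly hom P" x] assms by simp

lemma frob_orbit_of_root:
  assumes "P \<noteq> 0" "poly (map_poly hom P) x = 0"
  shows "least_power frob x > 0" "(frob ^^ least_power frob x) x = x"
    and "inj_on (\<lambda>j. (frob ^^ j) x) {..<least_power frob x}"
    and "least_power frob x \<le> degree P"
proof -
  let ?r = "least_power frob x"
  have "map_poly hom P \<noteq> 0"
    using assms(1) by simp
  then have roots_finite: "finite {y. poly (map_poly hom P) y = 0}"
    by (rule poly_roots_finite)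
  have orbit_roots: "range (\<lambda>j. (frob ^^ j) x) \<subseteq> {y. poly (map_poly hom P) y = 0}"
    using poly_map_poly_funpow_frob_root[OF assms(2)] by auto
  have "inj frob"
    by (rule frob.inj_f)
  then obtain n where n: "n > 0" "(frob ^^ n) x = x"
    using funpow_period_exists[OF _ finite_subset[OF orbit_roots roots_finite]] by blast
  show "(frob ^^ ?r) x = x" "?r > 0"
    by (rule least_powerI[OF n(2,1)])+
  show inj: "inj_on (\<lambda>j. (frob ^^ j) x) {..<?r}"
    using inj_on_funpow_least_power[OF \<open>inj frob\<close>] .
  have "?r = card ((\<lambda>j. (frob ^^ j) x) ` {..<?r})"
    using card_image[OF inj] by simp
  also have "\<dots> \<le> card {y. poly (map_poly hom P) y = 0}"
    using orbit_roots roots_finite by (intro card_mono) auto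
  also have "\<dots> \<le> degree P"
    using card_poly_roots_bound[OF \<open>map_poly hom P \<noteq> 0\<close>] by simp
  finally show "?r \<le> degree P" .
qed

lemma map_poly_irreducible_eq_prod_conjugates:
  assumes "monic q" "irreducible q" and root: "poly (map_poly hom q) \<alpha> = 0"
  shows "map_poly hom q = (\<Prod>j<degree q. [:- (frob ^^ j) \<alpha>, 1:])"
    and "(frob ^^ degree q) \<alpha> = \<alpha>"
    and "inj_on (\<lambda>j. (frob ^^ j) \<alpha>) {..<degree q}"
proof -
  define r where "r = least_power frob \<alpha>"
  have "q \<noteq> 0"
    using assms(2) by auto
  note orbit = frob_orbit_of_root[OF this root, folded r_def]
  define P where "P = (\<Prod>j<r. [:- (frob ^^ j) \<alpha>, 1:])"
  have "map_poly frob P = (\<Prod>j<r. [:- (frob ^^ Suc j) \<alpha>, 1:])"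
    by (simp add: P_def frob.poly_hom.hom_prod frob.hom_uminus)
  also have "\<dots> = P"
    unfolding P_def by (rule prod_lessThan_cyclic_shift) (simp add: orbit(2))
  finally obtain P0 where P0: "P = map_poly hom P0"
    using frob_invariant_poly_descends by blast
  have "monic P"
    unfolding P_def lead_coeff_prod by simp
  then have "monic P0"
    using P0 by simp
  have "degree P = r"
    by (simp add: P_def degree_prod_sum_eq)
  then have "degree P0 = r"
    using P0 by simp
  have "[:- (frob ^^ 0) \<alpha>, 1:] dvd P"
    unfolding P_def using orbit(1) by (intro dvd_prodI) auto
  then have "[:- \<alpha>, 1:] dvd map_poly hom P0"
    using P0 by simp
  moreover have "[:- \<alpha>, 1:] dvd map_poly hom q"
    using root by (simp add: dvd_iff_poly_eq_0)
  ultimately have "\<not> coprime (map_poly hom q) (map_poly hom P0)"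
    using coprime_common_divisor[of "map_poly hom q" "map_poly hom P0" "[:- \<alpha>, 1:]"] by auto
  then have "q dvd P0"
    using coprime_if_irreducible_not_dvd[OF assms(2), of P0] coprime_map_poly by blast
  moreover have "P0 \<noteq> 0"
    using \<open>monic P0\<close> by auto
  ultimately have "degree q \<le> degree P0"
    by (rule dvd_imp_degree_le)
  then have r_eq: "r = degree q"
    using orbit(4) \<open>degree P0 = r\<close> by simp
  then have "q = P0"
    using monic_dvd_eq_of_degree_le[OF assms(1) \<open>monic P0\<close> \<open>q dvd P0\<close>] \<open>degree P0 = r\<close>
    by simp
  with r_eq show "map_poly hom q = (\<Prod>j<degree q. [:- (frob ^^ j) \<alpha>, 1:])"
    and "(frob ^^ degree q) \<alpha> = \<alpha>" and "inj_on (\<lambda>j. (frob ^^ j) \<alpha>) {..<degree q}"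
    using P0 P_def orbit by simp_all
qed

end

locale homog_factor_setting = finite_field_embedding hom
  for hom :: "'a::{field,finite} \<Rightarrow> 'b::field" +
  fixes f g q :: "'a poly" and \<alpha> :: 'b
  assumes coprime_fg: "coprime f g"
    and monic_q: "monic q" and irreducible_q: "irreducible q"
    and homog_eval_nonzero: "homog_eval q g f \<noteq> 0"
    and splitting_field: "is_splitting_field hom q"
    and root: "poly (map_poly hom q) \<alpha> = 0"
begin

lemmas q_conjugates = map_poly_irreducible_eq_prod_conjugates[OF monic_q irreducible_q root]

lemma degree_q_pos: "degree q > 0"
  by (rule degree_pos_if_irreducible[OF irreducible_q])

lemma funpow_frob_degree_q: "(frob ^^ degree q) x = x"
proof -
  define K where "K = {x. (frob ^^ degree q) x = x}"
  have "is_subfield K"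
    unfolding is_subfield_def K_def
    by (simp add: frob_iter.hom_add frob_iter.hom_mult frob_iter.hom_uminus frob_iter.hom_inverse)
  moreover have "range hom \<subseteq> K"
    unfolding K_def by auto
  moreover have "{x. poly (map_poly hom q) x = 0} \<subseteq> K"
  proof
    fix x assume "x \<in> {x. poly (map_poly hom q) x = 0}"
    then obtain j where "x = (frob ^^ j) \<alpha>"
      by (auto simp: q_conjugates(1) poly_prod prod_zero_iff)
    moreover have "(frob ^^ degree q) ((frob ^^ j) \<alpha>) = (frob ^^ j) ((frob ^^ degree q) \<alpha>)"
      using fun_cong[OF funpow_add[of "degree q" j frob], of \<alpha>]
        fun_cong[OF funpow_add[of j "degree q" frob], of \<alpha>]
      by (simp add: add.commute)
    ultimately show "x \<in> K"
      unfolding K_def using q_conjugates(2) by simp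
  qed
  ultimately have "K = UNIV"
    using splitting_field unfolding is_splitting_field_def by blast
  then show ?thesis
    unfolding K_def by blast
qed

definition conj_factor :: "nat \<Rightarrow> 'b poly" where
  "conj_factor j = map_poly hom f - smult ((frob ^^ j) \<alpha>) (map_poly hom g)"

lemma map_poly_funpow_frob_conj_factor:
  "map_poly (frob ^^ i) (conj_factor j) = conj_factor (i + j)"
  by (simp add: conj_factor_def frob_iter.poly_hom.hom_minus frob_iter.map_poly_hom_smult funpow_add)

lemma conj_factor_degree_q: "conj_factor (degree q) = conj_factor 0"
  by (simp add: conj_factor_def q_conjugates(2))

lemma map_poly_homog_eval_eq_prod_conj_factor:
  "map_poly hom (homog_eval q g f) = (\<Prod>j<degree q. conj_factor j)"
  by (simp add: map_poly_homog_eval q_conjugates(1) homog_eval_prod_linear conj_factor_def)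

lemma coprime_conj_factor:
  assumes "i < degree q" "j < degree q" "i \<noteq> j"
  shows "coprime (conj_factor i) (conj_factor j)"
proof (rule coprimeI)
  fix c assume c: "c dvd conj_factor i" "c dvd conj_factor j"
  have "conj_factor i - conj_factor j = smult ((frob ^^ j) \<alpha> - (frob ^^ i) \<alpha>) (map_poly hom g)"
    by (simp add: conj_factor_def smult_diff_left)
  moreover have "c dvd conj_factor i - conj_factor j"
    using c by (rule dvd_diff)
  ultimately have "c dvd smult ((frob ^^ j) \<alpha> - (frob ^^ i) \<alpha>) (map_poly hom g)"
    by simp
  moreover have "(frob ^^ j) \<alpha> - (frob ^^ i) \<alpha> \<noteq> 0"
    using q_conjugates(3) assms by (auto dest: inj_onD)
  ultimately have "c dvd map_poly hom g"
    by (rule dvd_smult_cancel)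
  moreover have "map_poly hom f = conj_factor i + smult ((frob ^^ i) \<alpha>) (map_poly hom g)"
    by (simp add: conj_factor_def)
  then have "c dvd map_poly hom f"
    using c(1) \<open>c dvd map_poly hom g\<close> by (simp add: dvd_add dvd_smult)
  ultimately show "is_unit c"
    by (intro coprime_common_divisor[OF coprime_map_poly[OF coprime_fg]])
qed

lemma conjugate_of_common_factor:
  assumes "irreducible D" "prime_elem d1" "prime_elem d2"
    and "d1 dvd map_poly hom D" "d2 dvd map_poly hom D"
  shows "\<exists>j<degree q. d2 dvd map_poly (frob ^^ j) d1"
proof -
  define N where "N = (\<Prod>j<degree q. map_poly (frob ^^ j) d1)"
  have "map_poly frob N = (\<Prod>j<degree q. map_poly (frob ^^ Suc j) d1)"
    by (simp add: N_def frob.poly_hom.hom_prod map_poly_map_poly o_def)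
  also have "\<dots> = N"
    unfolding N_def by (rule prod_lessThan_cyclic_shift) (simp add: funpow_frob_degree_q map_poly_idI)
  finally obtain N0 where N0: "N = map_poly hom N0"
    using frob_invariant_poly_descends by blast
  have "map_poly (frob ^^ 0) d1 dvd N"
    unfolding N_def using degree_q_pos by (intro dvd_prodI) auto
  then have "d1 dvd N"
    by simp
  then have "\<not> coprime (map_poly hom D) (map_poly hom N0)"
    using N0 assms(4) prime_elem_not_unit[OF assms(2)]
      coprime_common_divisor[of "map_poly hom D" "map_poly hom N0" d1] by auto
  then have "D dvd N0"
    using coprime_if_irreducible_not_dvd[OF assms(1), of N0] coprime_map_poly by blast
  then have "d2 dvd N"
    unfolding N0 using assms(5) poly_hom.hom_dvd dvd_trans by blast
  then show ?thesis
    unfolding N_def using prime_elem_dvd_prod[OF assms(3)] by auto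
qed

lemma unique_factor_above:
  assumes "monic d" "irreducible d" "d dvd conj_factor 0"
  shows "\<exists>!D. monic D \<and> irreducible D \<and> D dvd homog_eval q g f \<and> d dvd map_poly hom D"
proof (rule ex_ex1I)
  have "conj_factor 0 dvd (\<Prod>j<degree q. conj_factor j)"
    using degree_q_pos by (intro dvd_prodI) auto
  then have "d dvd map_poly hom (homog_eval q g f)"
    unfolding map_poly_homog_eval_eq_prod_conj_factor using assms(3) by (rule dvd_trans[rotated])
  then show "\<exists>D. monic D \<and> irreducible D \<and> D dvd homog_eval q g f \<and> d dvd map_poly hom D"
    using monic_irreducible_factor_lift[OF homog_eval_nonzero field_poly_irreducible_imp_prime[OF assms(2)]]
    by blast
next
  fix D1 D2
  assume "monic D1 \<and> irreducible D1 \<and> D1 dvd homog_eval q g f \<and> d dvd map_poly hom D1"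
    and "monic D2 \<and> irreducible D2 \<and> D2 dvd homog_eval q g f \<and> d dvd map_poly hom D2"
  then show "D1 = D2"
    using irreducible_not_unit[OF assms(2)]
    by (intro monic_irreducible_eq_of_common_factor[of D1 D2 d]) auto
qed

lemma unique_factor_below:
  assumes "monic D" "irreducible D" "D dvd homog_eval q g f"
  shows "\<exists>!d. monic d \<and> irreducible d \<and> d dvd conj_factor 0 \<and> d dvd map_poly hom D"
proof (rule ex_ex1I)
  have "degree (map_poly hom D) > 0"
    using degree_pos_if_irreducible[OF assms(2)] by simp
  then obtain e r where "irreducible e" "monic e" "map_poly hom D = e * r"
    using irreducible_monic_factor by blast
  then have e: "irreducible e" "monic e" "e dvd map_poly hom D"
    by simp_all
  have "e dvd (\<Prod>j<degree q. conj_factor j)"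
    unfolding map_poly_homog_eval_eq_prod_conj_factor[symmetric]
    using e(3) poly_hom.hom_dvd[OF assms(3)] by (rule dvd_trans)
  then obtain j where j: "j < degree q" "e dvd conj_factor j"
    using prime_elem_dvd_prod[OF field_poly_irreducible_imp_prime[OF e(1)]] by auto
  define k where "k = degree q - j"
  have "map_poly (frob ^^ k) e dvd conj_factor 0"
    using frob_iter.poly_hom.hom_dvd[OF j(2), of k] j(1)
    by (simp add: map_poly_funpow_frob_conj_factor k_def conj_factor_degree_q)
  moreover have "map_poly (frob ^^ k) e dvd map_poly hom D"
    using frob_iter.poly_hom.hom_dvd[OF e(3), of k] by simp
  moreover have "degree (map_poly (frob ^^ k) e) > 0"
    using degree_pos_if_irreducible[OF e(1)] by simp
  then obtain d r' where "irreducible d" "monic d" "map_poly (frob ^^ k) e = d * r'"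
    using irreducible_monic_factor by blast
  ultimately show "\<exists>d. monic d \<and> irreducible d \<and> d dvd conj_factor 0 \<and> d dvd map_poly hom D"
    using dvd_trans[of d "map_poly (frob ^^ k) e"] by auto
next
  fix d1 d2
  assume d1: "monic d1 \<and> irreducible d1 \<and> d1 dvd conj_factor 0 \<and> d1 dvd map_poly hom D"
    and d2: "monic d2 \<and> irreducible d2 \<and> d2 dvd conj_factor 0 \<and> d2 dvd map_poly hom D"
  obtain j where j: "j < degree q" "d2 dvd map_poly (frob ^^ j) d1"
    using conjugate_of_common_factor[OF assms(2)] d1 d2 field_poly_irreducible_imp_prime by blast
  have "map_poly (frob ^^ j) d1 dvd conj_factor j"
    using frob_iter.poly_hom.hom_dvd[of d1 "conj_factor 0" j] d1
    by (simp add: map_poly_funpow_frob_conj_factor)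
  then have "d2 dvd conj_factor j"
    using j(2) by (rule dvd_trans[rotated])
  have "j = 0"
  proof (rule ccontr)
    assume "j \<noteq> 0"
    then have "coprime (conj_factor 0) (conj_factor j)"
      using j(1) degree_q_pos by (intro coprime_conj_factor) auto
    moreover have "d2 dvd conj_factor 0"
      using d2 by simp
    ultimately have "is_unit d2"
      using \<open>d2 dvd conj_factor j\<close> by (rule coprime_common_divisor)
    then show False
      using d2 irreducible_not_unit by blast
  qed
  then show "d1 = d2"
    using j(2) d1 d2 irreducible\<^sub>d_dvd_eq[of d2 d1] by simp
qed

end

theorem mainTheorem3:
  fixes f g q :: "'a::{field,finite} poly"
    and h :: "'a \<Rightarrow> 'b::field"
    and \<alpha> :: 'b
  assumes "coprime f g"
    and "lead_coeff q = 1" and "irreducible q"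
    and "homog_eval q g f \<noteq> 0"
    and "is_splitting_field h q"
    and "poly (map_poly h q) \<alpha> = 0"
  shows "num_monic_irred_factors (homog_eval q g f)
       = num_monic_irred_factors (map_poly h f - smult \<alpha> (map_poly h g))"
proof -
  have "field_hom h"
    using assms(5) unfolding is_splitting_field_def is_field_hom_def by unfold_locales auto
  then interpret homog_factor_setting h f g q \<alpha>
    using assms
    by (simp add: homog_factor_setting_def homog_factor_setting_axioms_def finite_field_embedding_def)
  have "map_poly h f - smult \<alpha> (map_poly h g) = conj_factor 0"
    by (simp add: conj_factor_def)
  then show ?thesis
    unfolding num_monic_irred_factors_def
    by (intro card_eq_if_bijective_relation[where R = "\<lambda>D d. d dvd map_poly h D"])
      (simp_all add: unique_factor_above unique_factor_below)
qed

end
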